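(* Let $V$, $J$, $\Delta_{\mathbf u,\mathbf v}$, $\phi^+_{\mathbf u}$, $\phi^-_{\mathbf u}$ be as in the context, and say an action $\mathbf u$ is optimal at $\mathbf Q$ if $\mathbf u\in\arg\min_{\mathbf v\in\mathcal U}J(\mathbf Q,\mathbf v)$. Then: (1) Let $\mathbf 0\in\mathcal U$ be the all-zero action and $\mathcal Q_0=\{\mathbf Q\in\mathcal Q: Q_{n,m}\le\phi^+_{\mathbf 0}(\mathbf Q_{-n,-m})\ \forall n\in\mathcal N,\ m\in\mathcal M_n\}$. For every $\mathbf Q\in\mathcal Q_0$, $\Delta_{\mathbf 0,\mathbf v}(\mathbf Q)\le 0$ for all $\mathbf v\in\mathcal U$, so $\mathbf 0$ is optimal at $\mathbf Q$. (2) Let $\mathbf u\in\mathcal U$ with $u_n=m\in\mathcal M_n$ for some $n\in\mathcal N$. Then for every $\mathbf Q\in\mathcal Q$ with $Q_{n,m}\ge\phi^-_{\mathbf u}(\mathbf Q_{-n,-m})$ we have $\Delta_{\mathbf u,\mathbf v}(\mathbf Q)\le0$ for all $\mathbf v\in\mathcal U$, so $\mathbf u$ is optimal at $\mathbf Q$. Moreover, if $u_0=m\in\mathcal M_0$, then $\phi^-_{\mathbf u}(\mathbf Q_{-0,-m})$ is monotonically non-increasing in $Q_{n,m}$ for every $n\in\mathcal N_m$ (all other components held fixed).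
   Context: Model. Let $N\ge 1$, $\mathcal N=\{0,1,\dots,N\}$ (base station $0$ is the macro base station, MBS) and $\mathcal N^+=\{1,\dots,N\}$ (small base stations, SBSs). Let $\mathcal M=\{1,\dots,M\}$ be the set of contents. For each $n\in\mathcal N$ let $\mathcal M_n\subseteq\mathcal M$ be the set of contents cached at BS $n$, with $\mathcal M_0=\mathcal M$; put $\tilde{\mathcal M}_n=\mathcal M_n\cup\{0\}$ and $\mathcal N_m=\{n\in\mathcal N^+: m\in\mathcal M_n\}$. Powers $p(n,m)\ge 0$ are given for $n\in\mathcal N$, $m\in\mathcal M_n$, and $p(n,0)=0$. A weight $w\ge 0$ is fixed. The feasible action space is $\mathcal U=\{\mathbf u=(u_n)_{n\in\mathcal N}: u_n\in\tilde{\mathcal M}_n\ \forall n,\ u_0\sum_{n\in\mathcal N^+}u_n=0\}$. A state is $\mathbf Q=(Q_{n,m})_{n\in\mathcal N,m\in\mathcal M_n}$ with $Q_{n,m}\in\mathcal Q_{n,m}=\{0,1,\dots,N_{n,m}\}$ for given positive integers $N_{n,m}$; $\mathcal Q=\prod_{n\in\mathcal N}\prod_{m\in\mathcal M_n}\mathcal Q_{n,m}$. Arrivals $A_{n,m}$ ($n\in\mathcal N$, $m\in\mathcal M$) are mutually independent nonnegative-integer random variables with fixed distributions, i.i.d. across time slots; $\tilde A_{0,m}=A_{0,m}+\sum_{n\in\mathcal N^+\setminus\mathcal N_m}A_{n,m}$. Given state $\mathbf Q$ and action $\mathbf u$, the next state $\mathbf Q'$ is $Q'_{0,m}=\min\{\mathbf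 1(u_0\neq m)Q_{0,m}+\tilde A_{0,m},N_{0,m}\}$ for $m\in\mathcal M_0$ and $Q'_{n,m}=\min\{\mathbf 1(u_0\neq m\text{ and }u_n\neq m)Q_{n,m}+A_{n,m},N_{n,m}\}$ for $n\in\mathcal N^+$, $m\in\mathcal M_n$; $\mathbb E$ denotes expectation over the arrivals. The per-stage cost is $g(\mathbf Q,\mathbf u)=d(\mathbf Q)+w\,p(\mathbf u)$ with $d(\mathbf Q)=\sum_{n\in\mathcal N}\sum_{m\in\mathcal M_n}Q_{n,m}$ and $p(\mathbf u)=\sum_{n\in\mathcal N}p(n,u_n)$. Value function. Fix a reference state $\mathbf Q^\dagger\in\mathcal Q$. Relative value iteration: $V_0\equiv 0$, $J_{l+1}(\mathbf Q,\mathbf u)=g(\mathbf Q,\mathbf u)+\mathbb E[V_l(\mathbf Q')]$, and $V_{l+1}(\mathbf Q)=\min_{\mathbf u\in\mathcal U}J_{l+1}(\mathbf Q,\mathbf u)-\min_{\mathbf u\in\mathcal U}J_{l+1}(\mathbf Q^\dagger,\mathbf u)$ for $l\ge0$. It is assumed (standing assumption of the paper, guaranteed under its unichain conditions) that $V_l$ converges pointwise to a function $V:\mathcal Q\to\mathbb R$; this $V$ is the value function, which solves the Bellman equation $\theta+V(\mathbf Q)=\min_{\mathbf u\in\mathcal U}\{g(\mathbf Q,\mathbf u)+\mathbb E[V(\mathbf Q')]\}$ for all $\mathbf Q$, and optimal policies choose actions in $\arg\min_{\mathbf u}J(\mathbf Q,\mathbf u)$. Further notation. $J(\mathbf Q,\mathbf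 u)=g(\mathbf Q,\mathbf u)+\mathbb E[V(\mathbf Q')]$ and $\Delta_{\mathbf u,\mathbf v}(\mathbf Q)=J(\mathbf Q,\mathbf u)-J(\mathbf Q,\mathbf v)$. For $(n,m)$ with $m\in\mathcal M_n$, $\mathbf Q_{-n,-m}=(Q_{i,j})_{(i,j)\neq(n,m)}$, and $(Q_{n,m},\mathbf Q_{-n,-m})$ denotes the full state. Define $\Phi_{\mathbf u}(\mathbf Q_{-n,-m})=\{Q_{n,m}\in\mathcal Q_{n,m}: \Delta_{\mathbf u,\mathbf v}(Q_{n,m},\mathbf Q_{-n,-m})\le0\ \forall\mathbf v\in\mathcal U,\ \mathbf v\ne\mathbf u\}$, $\phi^+_{\mathbf u}(\mathbf Q_{-n,-m})=\max\Phi_{\mathbf u}(\mathbf Q_{-n,-m})$ if this set is nonempty and $-\infty$ otherwise, and $\phi^-_{\mathbf u}(\mathbf Q_{-n,-m})=\min\Phi_{\mathbf u}(\mathbf Q_{-n,-m})$ if nonempty and $+\infty$ otherwise. *)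

theory Defs
  imports "HOL-Probability.Probability"
begin

text \<open>Base stations are indexed 0..NN (0 = MBS), contents 1..MM.
 Ms n = set of contents cached at BS n; Ncap n m = buffer bound N_{n,m};
 dist n m = distribution of arrivals A_{n,m}; pw n m = power p(n,m); wt = weight w.\<close>
record mdp =
  NN :: nat
  MM :: nat
  Ms :: "nat \<Rightarrow> nat set"
  Ncap :: "nat \<Rightarrow> nat \<Rightarrow> nat"
  dist :: "nat \<Rightarrow> nat \<Rightarrow> nat pmf"
  pw :: "nat \<Rightarrow> nat \<Rightarrow> real"
  wt :: real

type_synonym state = "nat \<Rightarrow> nat \<Rightarrow> nat"   (* Q n m; 0 outside valid indices *)
type_synonym action = "nat \<Rightarrow> nat"           (* u n; 0 for n > NN *)
type_synonym arrival = "nat \<Rightarrow> nat \<Rightarrow> nat"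

definition valid_mdp :: "mdp \<Rightarrow> bool" where
  "valid_mdp S \<longleftrightarrow>
     NN S \<ge> 1 \<and>
     Ms S 0 = {1..MM S} \<and>
     (\<forall>n\<in>{1..NN S}. Ms S n \<subseteq> {1..MM S}) \<and>
     (\<forall>n\<le>NN S. \<forall>m\<in>Ms S n. Ncap S n m > 0) \<and>
     (\<forall>n\<le>NN S. \<forall>m\<in>Ms S n. pw S n m \<ge> 0) \<and>
     (\<forall>n\<le>NN S. pw S n 0 = 0) \<and>
     wt S \<ge> 0"

definition idx :: "mdp \<Rightarrow> nat \<Rightarrow> nat \<Rightarrow> bool" where
  "idx S n m \<longleftrightarrow> n \<le> NN S \<and> m \<in> Ms S n"

definition Uset :: "mdp \<Rightarrow> action set" where
  "Uset S = {u. (\<forall>n\<le>NN S. u n \<in> Ms S n \<union> {0}) \<and> (\<forall>n. n > NN S \<longrightarrow> u n = 0)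
               \<and> u 0 * (\<Sum>n\<in>{1..NN S}. u n) = 0}"

definition Qset :: "mdp \<Rightarrow> state set" where
  "Qset S = {Q. \<forall>n m. (idx S n m \<longrightarrow> Q n m \<le> Ncap S n m) \<and> (\<not> idx S n m \<longrightarrow> Q n m = 0)}"

definition Nm :: "mdp \<Rightarrow> nat \<Rightarrow> nat set" where
  "Nm S m = {n\<in>{1..NN S}. m \<in> Ms S n}"

definition Atil :: "mdp \<Rightarrow> arrival \<Rightarrow> nat \<Rightarrow> nat" where
  "Atil S a m = a 0 m + (\<Sum>n\<in>{1..NN S} - Nm S m. a n m)"

definition nxt :: "mdp \<Rightarrow> state \<Rightarrow> action \<Rightarrow> arrival \<Rightarrow> state" where
  "nxt S Q u a = (\<lambda>n m.
     if idx S n m then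
       (if n = 0 then min ((if u 0 \<noteq> m then Q 0 m else 0) + Atil S a m) (Ncap S 0 m)
        else min ((if u 0 \<noteq> m \<and> u n \<noteq> m then Q n m else 0) + a n m) (Ncap S n m))
     else 0)"

definition arrivals :: "mdp \<Rightarrow> arrival pmf" where
  "arrivals S = map_pmf (\<lambda>f n m. f (n, m))
      (Pi_pmf ({0..NN S} \<times> {1..MM S}) 0 (\<lambda>(n, m). dist S n m))"

definition dcost :: "mdp \<Rightarrow> state \<Rightarrow> real" where
  "dcost S Q = (\<Sum>n\<in>{0..NN S}. \<Sum>m\<in>Ms S n. real (Q n m))"

definition pcost :: "mdp \<Rightarrow> action \<Rightarrow> real" where
  "pcost S u = (\<Sum>n\<in>{0..NN S}. pw S n (u n))"

definition gcost :: "mdp \<Rightarrow> state \<Rightarrow> action \<Rightarrow> real" where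
  "gcost S Q u = dcost S Q + wt S * pcost S u"

definition Jfun :: "mdp \<Rightarrow> (state \<Rightarrow> real) \<Rightarrow> state \<Rightarrow> action \<Rightarrow> real" where
  "Jfun S V Q u = gcost S Q u + measure_pmf.expectation (arrivals S) (\<lambda>a. V (nxt S Q u a))"

primrec RVI :: "mdp \<Rightarrow> state \<Rightarrow> nat \<Rightarrow> state \<Rightarrow> real" where
  "RVI S Qdag 0 = (\<lambda>Q. 0)"
| "RVI S Qdag (Suc l) = (\<lambda>Q. Min ((Jfun S (RVI S Qdag l) Q) ` Uset S)
                              - Min ((Jfun S (RVI S Qdag l) Qdag) ` Uset S))"

definition Delta :: "mdp \<Rightarrow> (state \<Rightarrow> real) \<Rightarrow> action \<Rightarrow> action \<Rightarrow> state \<Rightarrow> real" where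
  "Delta S V u v Q = Jfun S V Q u - Jfun S V Q v"

definition is_optimal :: "mdp \<Rightarrow> (state \<Rightarrow> real) \<Rightarrow> state \<Rightarrow> action \<Rightarrow> bool" where
  "is_optimal S V Q u \<longleftrightarrow> u \<in> Uset S \<and> (\<forall>v\<in>Uset S. Jfun S V Q u \<le> Jfun S V Q v)"

text \<open>Replace the (n,m) component of Q by x: the state (x, Q_{-n,-m}).\<close>
definition upd :: "state \<Rightarrow> nat \<Rightarrow> nat \<Rightarrow> nat \<Rightarrow> state" where
  "upd Q n m x = Q(n := (Q n)(m := x))"

text \<open>Phi_u(Q_{-n,-m}); only the components of Q other than (n,m) matter.\<close>
definition Phi :: "mdp \<Rightarrow> (state \<Rightarrow> real) \<Rightarrow> action \<Rightarrow> nat \<Rightarrow> nat \<Rightarrow> state \<Rightarrow> nat set" where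
  "Phi S V u n m Q = {x\<in>{0..Ncap S n m}.
       \<forall>v\<in>Uset S. v \<noteq> u \<longrightarrow> Delta S V u v (upd Q n m x) \<le> 0}"

definition phi_plus :: "mdp \<Rightarrow> (state \<Rightarrow> real) \<Rightarrow> action \<Rightarrow> nat \<Rightarrow> nat \<Rightarrow> state \<Rightarrow> ereal" where
  "phi_plus S V u n m Q = (if Phi S V u n m Q \<noteq> {} then ereal (real (Max (Phi S V u n m Q))) else -\<infinity>)"

definition phi_minus :: "mdp \<Rightarrow> (state \<Rightarrow> real) \<Rightarrow> action \<Rightarrow> nat \<Rightarrow> nat \<Rightarrow> state \<Rightarrow> ereal" where
  "phi_minus S V u n m Q = (if Phi S V u n m Q \<noteq> {} then ereal (real (Min (Phi S V u n m Q))) else \<infinity>)"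

definition zero_action :: action where
  "zero_action = (\<lambda>n. 0)"

definition Q0set :: "mdp \<Rightarrow> (state \<Rightarrow> real) \<Rightarrow> state set" where
  "Q0set S V = {Q\<in>Qset S. \<forall>n\<le>NN S. \<forall>m\<in>Ms S n.
                  ereal (real (Q n m)) \<le> phi_plus S V zero_action n m Q}"

end

theory Submission
  imports Defs
begin

text \<open>The value function is nondecreasing in every queue length: each iterate of relative value
iteration is (costs and transitions are monotone in the state, and a pointwise minimum over
actions preserves this), and the inequality passes to the limit. An action that serves content
m at base station n (u 0 = m or u n = m) empties queue (n,m), so its successor state does not
depend on Q n m; the delay term d(Q) cancels in the difference, hence
Delta u v (Q) is nonincreasing in Q n m. Thus once u is optimal at some value of Q n m it stays
optimal above it, which gives both threshold statements; monotonicity of the threshold of the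
MBS in Q n m, n caching m, follows in the same way because the MBS also serves queue (n,m).\<close>

definition state_mono :: "mdp \<Rightarrow> (state \<Rightarrow> real) \<Rightarrow> bool" where
  "state_mono S W \<longleftrightarrow> (\<forall>Q\<in>Qset S. \<forall>Q'\<in>Qset S. (\<forall>n m. Q n m \<le> Q' n m) \<longrightarrow> W Q \<le> W Q')"

definition serves :: "action \<Rightarrow> nat \<Rightarrow> nat \<Rightarrow> bool" where
  "serves w n m \<longleftrightarrow> w 0 = m \<or> w n = m"


lemma nxt_in_Qset: "nxt S Q w a \<in> Qset S"
  unfolding nxt_def Qset_def by auto

lemma nxt_mono:
  assumes "\<forall>n m. Q1 n m \<le> Q2 n m"
  shows "nxt S Q1 w a k j \<le> nxt S Q2 w a k j"
proof -
  have "Q1 k j \<le> Q2 k j" "Q1 0 j \<le> Q2 0 j" using assms by auto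
  then show ?thesis unfolding nxt_def by (auto intro: min.mono)
qed

lemma nxt_eq_if_serves:
  assumes "serves w n m" and "\<forall>k j. (k, j) \<noteq> (n, m) \<longrightarrow> Q1 k j = Q2 k j"
  shows "nxt S Q1 w a = nxt S Q2 w a"
proof (intro ext)
  fix k j
  show "nxt S Q1 w a k j = nxt S Q2 w a k j"
  proof (cases "(k, j) = (n, m)")
    case True then show ?thesis using assms(1) unfolding serves_def nxt_def by auto
  next
    case False then show ?thesis using assms(2) unfolding nxt_def by simp
  qed
qed

lemma integrable_state_mono_nxt:
  assumes "state_mono S W"
  shows "integrable (measure_pmf (arrivals S)) (\<lambda>a. W (nxt S Q w a))"
proof -
  define Qmax :: state where "Qmax = (\<lambda>n m. if idx S n m then Ncap S n m else 0)"
  have bounds: "(\<lambda>_ _. 0) \<in> Qset S" "Qmax \<in> Qset S" unfolding Qset_def Qmax_def by auto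
  have "norm (W (nxt S Q w a)) \<le> \<bar>W (\<lambda>_ _. 0)\<bar> + \<bar>W Qmax\<bar>" for a
  proof -
    have "W (\<lambda>_ _. 0) \<le> W (nxt S Q w a)"
      using assms bounds nxt_in_Qset unfolding state_mono_def by auto
    moreover have "W (nxt S Q w a) \<le> W Qmax"
      using assms bounds nxt_in_Qset[of S Q w a] unfolding state_mono_def
      by (auto simp: Qmax_def Qset_def)
    ultimately show ?thesis by auto
  qed
  then show ?thesis
    by (intro measure_pmf.integrable_const_bound[where B="\<bar>W (\<lambda>_ _. 0)\<bar> + \<bar>W Qmax\<bar>"]) auto
qed

lemma expectation_nxt_mono:
  assumes "state_mono S W" and "\<forall>n m. Q1 n m \<le> Q2 n m"
  shows "measure_pmf.expectation (arrivals S) (\<lambda>a. W (nxt S Q1 w a))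
       \<le> measure_pmf.expectation (arrivals S) (\<lambda>a. W (nxt S Q2 w a))"
  using assms nxt_in_Qset nxt_mono integrable_state_mono_nxt unfolding state_mono_def
  by (intro integral_mono) blast+

lemma dcost_mono: "\<forall>n m. Q1 n m \<le> Q2 n m \<Longrightarrow> dcost S Q1 \<le> dcost S Q2"
  unfolding dcost_def by (intro sum_mono) auto

lemma Jfun_mono:
  assumes "state_mono S W" and "\<forall>n m. Q1 n m \<le> Q2 n m"
  shows "Jfun S W Q1 w \<le> Jfun S W Q2 w"
  unfolding Jfun_def gcost_def
  using dcost_mono[OF assms(2), of S] expectation_nxt_mono[OF assms, of w] by linarith


lemma zero_action_in_Uset: "zero_action \<in> Uset S"
  unfolding Uset_def zero_action_def by simp

lemma Uset_nonzeroD: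
  assumes "v \<in> Uset S" and "v n \<noteq> 0"
  shows "n \<le> NN S \<and> v n \<in> Ms S n"
  using assms unfolding Uset_def by (cases "n \<le> NN S") auto

lemma finite_Uset:
  assumes "valid_mdp S"
  shows "finite (Uset S)"
proof -
  have fin: "finite (Ms S n)" if "n \<le> NN S" for n
    using assms that finite_subset[of "Ms S n" "{1..MM S}"]
    by (cases "n = 0") (auto simp: valid_mdp_def)
  have "inj_on (\<lambda>u. restrict u {0..NN S}) (Uset S)"
  proof (rule inj_onI)
    fix u v assume "u \<in> Uset S" "v \<in> Uset S" "restrict u {0..NN S} = restrict v {0..NN S}"
    then show "u = v"
      by (metis Uset_nonzeroD atLeastAtMost_iff le0 restrict_apply' ext)
  qed
  moreover have "(\<lambda>u. restrict u {0..NN S}) ` Uset S \<subseteq> PiE {0..NN S} (\<lambda>n. insert 0 (Ms S n))"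
    by (auto simp: Uset_def)
  moreover have "finite (PiE {0..NN S} (\<lambda>n. insert 0 (Ms S n)))"
    by (rule finite_PiE) (auto simp: fin)
  ultimately show ?thesis using finite_imageD finite_subset by blast
qed

lemma RVI_state_mono:
  assumes "valid_mdp S"
  shows "state_mono S (RVI S Qdag l)"
proof (induction l)
  case 0 then show ?case by (simp add: state_mono_def)
next
  case (Suc l)
  let ?J = "Jfun S (RVI S Qdag l)"
  show ?case unfolding state_mono_def
  proof (intro ballI impI)
    fix Q Q' assume "Q \<in> Qset S" "Q' \<in> Qset S" and le: "\<forall>n m. Q n m \<le> Q' n m"
    have fin: "finite (Uset S)" using finite_Uset[OF assms] .
    then have "Min (?J Q' ` Uset S) \<in> ?J Q' ` Uset S"
      using zero_action_in_Uset by (intro Min_in) auto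
    then obtain u where u: "u \<in> Uset S" "Min (?J Q' ` Uset S) = ?J Q' u" by auto
    have "Min (?J Q ` Uset S) \<le> ?J Q u" using fin u by (intro Min_le) auto
    also have "\<dots> \<le> ?J Q' u" using Jfun_mono[OF Suc le] .
    finally show "RVI S Qdag (Suc l) Q \<le> RVI S Qdag (Suc l) Q'" using u by simp
  qed
qed

lemma limit_state_mono:
  assumes "valid_mdp S" and conv: "\<forall>Q\<in>Qset S. (\<lambda>l. RVI S Qdag l Q) \<longlonglongrightarrow> V Q"
  shows "state_mono S V"
  unfolding state_mono_def
proof (intro ballI impI)
  fix Q Q' assume Q: "Q \<in> Qset S" "Q' \<in> Qset S" and "\<forall>n m. Q n m \<le> Q' n m"
  then have "\<forall>l. RVI S Qdag l Q \<le> RVI S Qdag l Q'"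
    using RVI_state_mono[OF assms(1)] unfolding state_mono_def by blast
  then show "V Q \<le> V Q'"
    using LIMSEQ_le[OF conv[rule_format, OF Q(1)] conv[rule_format, OF Q(2)]] by blast
qed


lemma Delta_antimono_if_serves:
  assumes "state_mono S W" and "serves w n m"
    and "\<forall>k j. Q1 k j \<le> Q2 k j" and "\<forall>k j. (k, j) \<noteq> (n, m) \<longrightarrow> Q1 k j = Q2 k j"
  shows "Delta S W w v Q2 \<le> Delta S W w v Q1"
  unfolding Delta_def Jfun_def gcost_def
  using expectation_nxt_mono[OF assms(1,3), of v] nxt_eq_if_serves[OF assms(2,4)] by simp

lemma Delta_upd_antimono_if_serves:
  assumes "state_mono S W" and "serves w n m" and "x \<le> y"
  shows "Delta S W w v (upd Q n m y) \<le> Delta S W w v (upd Q n m x)"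
  using assms by (intro Delta_antimono_if_serves[where n = n and m = m]) (auto simp: upd_def)

lemma upd_self: "upd Q n m (Q n m) = Q"
  unfolding upd_def by auto

lemma finite_Phi: "finite (Phi S W u n m Q)"
  unfolding Phi_def by simp

lemma is_optimal_iff_Delta:
  "u \<in> Uset S \<Longrightarrow> is_optimal S W Q u \<longleftrightarrow> (\<forall>v\<in>Uset S. Delta S W u v Q \<le> 0)"
  unfolding is_optimal_def Delta_def by auto

lemma Delta_zero_action_nonpos_below_phi_plus:
  assumes "state_mono S W" and "Q \<in> Q0set S W" and v: "v \<in> Uset S"
  shows "Delta S W zero_action v Q \<le> 0"
proof (cases "v = zero_action")
  case True then show ?thesis by (simp add: Delta_def)
next
  case False
  then obtain n where vn: "v n \<noteq> 0" unfolding zero_action_def by auto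
  define m where "m = v n"
  have "n \<le> NN S" "m \<in> Ms S n" using Uset_nonzeroD[OF v vn] m_def by auto
  then have "ereal (real (Q n m)) \<le> phi_plus S W zero_action n m Q"
    using assms(2) unfolding Q0set_def by blast
  then have ne: "Phi S W zero_action n m Q \<noteq> {}"
    and le: "Q n m \<le> Max (Phi S W zero_action n m Q)"
    unfolding phi_plus_def by (auto split: if_splits)
  define y where "y = Max (Phi S W zero_action n m Q)"
  have "y \<in> Phi S W zero_action n m Q" using ne finite_Phi y_def by simp
  then have "Delta S W zero_action v (upd Q n m y) \<le> 0"
    using v False unfolding Phi_def by auto
  moreover have "serves v n m" "Q n m \<le> y" using m_def le y_def by (auto simp: serves_def)
  then have "Delta S W v zero_action (upd Q n m y) \<le> Delta S W v zero_action Q"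
    using Delta_upd_antimono_if_serves[OF assms(1)] upd_self by metis
  ultimately show ?thesis unfolding Delta_def by simp
qed

lemma Delta_nonpos_above_phi_minus:
  assumes "state_mono S W" and "u n = m"
    and "ereal (real (Q n m)) \<ge> phi_minus S W u n m Q" and v: "v \<in> Uset S"
  shows "Delta S W u v Q \<le> 0"
proof (cases "v = u")
  case True then show ?thesis by (simp add: Delta_def)
next
  case False
  from assms(3) have ne: "Phi S W u n m Q \<noteq> {}" and le: "Min (Phi S W u n m Q) \<le> Q n m"
    unfolding phi_minus_def by (auto split: if_splits)
  define x where "x = Min (Phi S W u n m Q)"
  have "x \<in> Phi S W u n m Q" using ne finite_Phi x_def by simp
  then have "Delta S W u v (upd Q n m x) \<le> 0"
    using v False unfolding Phi_def by auto
  moreover have "Delta S W u v Q \<le> Delta S W u v (upd Q n m x)"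
    using Delta_upd_antimono_if_serves[OF assms(1), of u n m x "Q n m" v Q]
    by (simp add: serves_def assms(2) le x_def upd_self)
  ultimately show ?thesis by simp
qed

lemma Phi_MBS_mono:
  assumes "state_mono S W" and "u 0 = m" and "n \<noteq> 0" and "x \<le> y"
  shows "Phi S W u 0 m (upd Q n m x) \<subseteq> Phi S W u 0 m (upd Q n m y)"
proof
  fix z assume z: "z \<in> Phi S W u 0 m (upd Q n m x)"
  have "Delta S W u v (upd (upd Q n m y) 0 m z) \<le> Delta S W u v (upd (upd Q n m x) 0 m z)" for v
    using assms by (intro Delta_antimono_if_serves[where n = n and m = m])
      (auto simp: serves_def upd_def)
  then show "z \<in> Phi S W u 0 m (upd Q n m y)"
    using z unfolding Phi_def by (auto intro: order_trans)
qed

lemma phi_minus_MBS_antimono: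
  assumes "state_mono S W" and "u 0 = m" and "n \<noteq> 0" and "x \<le> y"
  shows "phi_minus S W u 0 m (upd Q n m y) \<le> phi_minus S W u 0 m (upd Q n m x)"
proof (cases "Phi S W u 0 m (upd Q n m x) = {}")
  case True then show ?thesis by (simp add: phi_minus_def)
next
  case False
  have sub: "Phi S W u 0 m (upd Q n m x) \<subseteq> Phi S W u 0 m (upd Q n m y)"
    using assms by (rule Phi_MBS_mono)
  then have "Phi S W u 0 m (upd Q n m y) \<noteq> {}" using False by auto
  with Min_antimono[OF sub False finite_Phi] False show ?thesis by (simp add: phi_minus_def)
qed

theorem theorem1:
  fixes S :: mdp and Qdag :: state and V :: "state \<Rightarrow> real"
  assumes valid: "valid_mdp S"
    and ref: "Qdag \<in> Qset S"
    and conv: "\<forall>Q\<in>Qset S. (\<lambda>l. RVI S Qdag l Q) \<longlonglongrightarrow> V Q"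
  shows "(\<forall>Q\<in>Q0set S V.
            (\<forall>v\<in>Uset S. Delta S V zero_action v Q \<le> 0) \<and> is_optimal S V Q zero_action)
       \<and> (\<forall>u\<in>Uset S. \<forall>n\<le>NN S. \<forall>m\<in>Ms S n. u n = m \<longrightarrow>
            (\<forall>Q\<in>Qset S. ereal (real (Q n m)) \<ge> phi_minus S V u n m Q \<longrightarrow>
               (\<forall>v\<in>Uset S. Delta S V u v Q \<le> 0) \<and> is_optimal S V Q u))
       \<and> (\<forall>u\<in>Uset S. \<forall>m\<in>Ms S 0. u 0 = m \<longrightarrow>
            (\<forall>Q\<in>Qset S. \<forall>n\<in>Nm S m. \<forall>x y. x \<le> y \<longrightarrow> y \<le> Ncap S n m \<longrightarrow>
               phi_minus S V u 0 m (upd Q n m y) \<le> phi_minus S V u 0 m (upd Q n m x)))"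
  (is "?zero \<and> ?serve \<and> ?MBS")
proof -
  have mono: "state_mono S V" using limit_state_mono[OF valid conv] .
  have ?zero
  proof
    fix Q assume "Q \<in> Q0set S V"
    then have "\<forall>v\<in>Uset S. Delta S V zero_action v Q \<le> 0"
      using Delta_zero_action_nonpos_below_phi_plus[OF mono] by blast
    then show "(\<forall>v\<in>Uset S. Delta S V zero_action v Q \<le> 0) \<and> is_optimal S V Q zero_action"
      by (simp add: is_optimal_iff_Delta zero_action_in_Uset)
  qed
  moreover have ?serve
  proof (intro ballI allI impI)
    fix u :: action and n m Q
    assume u: "u \<in> Uset S" and "u n = m" "ereal (real (Q n m)) \<ge> phi_minus S V u n m Q"
    then have "\<forall>v\<in>Uset S. Delta S V u v Q \<le> 0"
      using Delta_nonpos_above_phi_minus[OF mono] by simp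
    with u show "(\<forall>v\<in>Uset S. Delta S V u v Q \<le> 0) \<and> is_optimal S V Q u"
      by (simp add: is_optimal_iff_Delta)
  qed
  moreover have ?MBS
  proof (intro ballI allI impI)
    fix u :: action and m n :: nat and Q and x y :: nat
    assume "u 0 = m" "n \<in> Nm S m" "x \<le> y"
    then show "phi_minus S V u 0 m (upd Q n m y) \<le> phi_minus S V u 0 m (upd Q n m x)"
      using phi_minus_MBS_antimono[OF mono] by (simp add: Nm_def)
  qed
  ultimately show ?thesis by (intro conjI)
qed

end
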